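(* If $L:\mathbb{R}^d\setminus\{0\}\to\mathbb{R}$ is $C^2$ and scale invariant, then for every $x\neq0$, $$\|\nabla L(x)\|_2\le\frac{\pi}{\|x\|_2}\sup_{\|y\|_2=1}\|\nabla^2L(y)\|_2 .$$
   Context: Scale invariant means $L(cx)=L(x)$ for all $c>0$, $x\neq0$. $\|\cdot\|_2$ on matrices is the spectral norm. *)

theory Defs
  imports "HOL-Analysis.Analysis"
begin

definition C2_grad_hess ::
  "(real^'n \<Rightarrow> real) \<Rightarrow> (real^'n \<Rightarrow> real^'n) \<Rightarrow> (real^'n \<Rightarrow> real^'n^'n) \<Rightarrow> bool" where
  "C2_grad_hess L g H \<longleftrightarrow>
     (\<forall>x. x \<noteq> 0 \<longrightarrow> (L has_derivative (\<lambda>h. g x \<bullet> h)) (at x)) \<and>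
     (\<forall>x. x \<noteq> 0 \<longrightarrow> (g has_derivative (\<lambda>h. H x *v h)) (at x)) \<and>
     continuous_on (UNIV - {0}) H"

definition scale_invariant :: "(real^'n \<Rightarrow> real) \<Rightarrow> bool" where
  "scale_invariant L \<longleftrightarrow> (\<forall>c x. c > 0 \<longrightarrow> x \<noteq> 0 \<longrightarrow> L (c *\<^sub>R x) = L x)"

definition spec_norm :: "real^'n^'m \<Rightarrow> real" where
  "spec_norm A = onorm (\<lambda>v. A *v v)"

end

theory Submission
  imports Defs
begin

text \<open>Scale invariance makes the gradient orthogonal to its base point and homogeneous of
  degree \<open>-1\<close>, so it suffices to bound it at a unit vector \<open>y\<close>. Restrict \<open>L\<close> to the great
  circle through \<open>y\<close> in the direction \<open>u\<close> of the gradient: \<open>f t = L (cos t y + sin t u)\<close> is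
  \<open>2\<pi>\<close>-periodic with \<open>f' 0 = \<parallel>\<nabla>L y\<parallel>\<close>, and by the orthogonality its second derivative is the
  Hessian quadratic form along the circle, bounded by the supremum \<open>M\<close> of the spectral norms.
  A critical point of \<open>f\<close> lies within distance \<open>\<pi>\<close> of \<open>0\<close> or of \<open>2\<pi>\<close>, so the mean value
  theorem applied to \<open>f'\<close> gives \<open>\<parallel>\<nabla>L y\<parallel> \<le> \<pi> M\<close>.\<close>

lemma deriv_bound_by_second_deriv_of_periodic:
  fixes f f' f'' :: "real \<Rightarrow> real"
  assumes "a < b"
    and f: "\<And>t. a \<le> t \<Longrightarrow> t \<le> b \<Longrightarrow> DERIV f t :> f' t"
    and f': "\<And>t. a \<le> t \<Longrightarrow> t \<le> b \<Longrightarrow> DERIV f' t :> f'' t"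
    and f''_bound: "\<And>t. a \<le> t \<Longrightarrow> t \<le> b \<Longrightarrow> \<bar>f'' t\<bar> \<le> M"
    and "f a = f b" and "f' a = f' b"
  shows "\<bar>f' a\<bar> \<le> (b - a) / 2 * M"
proof -
  obtain z where z: "a < z" "z < b" "DERIV f z :> 0"
  proof -
    have "continuous_on {a..b} f"
      using f by (meson DERIV_continuous atLeastAtMost_iff continuous_at_imp_continuous_on)
    moreover have "f differentiable (at t)" if "a < t" "t < b" for t
      using f[of t] that real_differentiable_def by force
    ultimately show ?thesis
      using Rolle[OF \<open>a < b\<close> \<open>f a = f b\<close>] that by blast
  qed
  have "f' z = 0"
    using DERIV_unique[OF f z(3)] z by simp
  obtain v where "a < v" "v < z" "f' z - f' a = (z - a) * f'' v"
    using MVT2[OF \<open>a < z\<close>, of f' f''] f' z by fastforce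
  with \<open>f' z = 0\<close> have "\<bar>f' a\<bar> = \<bar>(z - a) * f'' v\<bar>"
    by (metis abs_minus_cancel diff_0)
  also have "\<dots> = (z - a) * \<bar>f'' v\<bar>"
    using z by (simp add: abs_mult)
  also have "\<dots> \<le> (z - a) * M"
    using f''_bound[of v] \<open>a < v\<close> \<open>v < z\<close> z by (intro mult_left_mono) auto
  finally have left: "\<bar>f' a\<bar> \<le> (z - a) * M" .
  obtain w where "z < w" "w < b" "f' b - f' z = (b - z) * f'' w"
    using MVT2[OF \<open>z < b\<close>, of f' f''] f' z by fastforce
  with \<open>f' z = 0\<close> \<open>f' a = f' b\<close> have "\<bar>f' a\<bar> = \<bar>(b - z) * f'' w\<bar>"
    by simp
  also have "\<dots> = (b - z) * \<bar>f'' w\<bar>"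
    using z by (simp add: abs_mult)
  also have "\<dots> \<le> (b - z) * M"
    using f''_bound[of w] \<open>z < w\<close> \<open>w < b\<close> z by (intro mult_left_mono) auto
  finally have right: "\<bar>f' a\<bar> \<le> (b - z) * M" .
  have "0 \<le> M"
    using f''_bound[of a] \<open>a < b\<close> by simp
  have "\<bar>f' a\<bar> \<le> min (z - a) (b - z) * M"
    using left right by (simp add: min_def)
  also have "\<dots> \<le> (b - a) / 2 * M"
    using \<open>0 \<le> M\<close> by (intro mult_right_mono) (auto simp: min_def)
  finally show ?thesis .
qed

lemma spec_norm_nonneg: "0 \<le> spec_norm A"
  unfolding spec_norm_def by (rule onorm_pos_le[OF matrix_vector_mul_bounded_linear])

lemma abs_quadratic_form_le_spec_norm:
  fixes A :: "real^'n^'n"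
  shows "\<bar>(A *v v) \<bullet> v\<bar> \<le> spec_norm A * (norm v)\<^sup>2"
proof -
  have "\<bar>(A *v v) \<bullet> v\<bar> \<le> norm (A *v v) * norm v"
    by (rule Cauchy_Schwarz_ineq2)
  also have "\<dots> \<le> spec_norm A * norm v * norm v"
    unfolding spec_norm_def
    by (intro mult_right_mono onorm[OF matrix_vector_mul_bounded_linear]) simp
  finally show ?thesis
    by (simp add: power2_eq_square mult.assoc)
qed

lemma bdd_above_spec_norm_image:
  fixes H :: "'a::topological_space \<Rightarrow> real^'n^'m"
  assumes "continuous_on S H" and "compact S"
  shows "bdd_above ((\<lambda>y. spec_norm (H y)) ` S)"
proof -
  obtain B where B: "\<And>y. y \<in> S \<Longrightarrow> norm (H y) \<le> B"
    using compact_imp_bounded[OF compact_continuous_image[OF assms]]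
    by (auto simp: bounded_iff)
  have "spec_norm (H y) \<le> real CARD('m) * real CARD('n) * B" if "y \<in> S" for y
    unfolding spec_norm_def
  proof (rule onorm_le_matrix_component)
    fix i j
    have "\<bar>H y $ i $ j\<bar> \<le> norm (H y $ i)" by (rule component_le_norm_cart)
    also have "\<dots> \<le> norm (H y)" by (rule Finite_Cartesian_Product.norm_nth_le)
    finally show "\<bar>H y $ i $ j\<bar> \<le> B" using B[OF that] by linarith
  qed
  then show ?thesis
    by (intro bdd_aboveI2) auto
qed

definition great_circle :: "'a::real_vector \<Rightarrow> 'a \<Rightarrow> real \<Rightarrow> 'a" where
  "great_circle y u t = cos t *\<^sub>R y + sin t *\<^sub>R u"

lemma great_circle_has_derivative:
  "(great_circle y u has_derivative (\<lambda>s. s *\<^sub>R great_circle u (- y) t)) (at t)"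
  unfolding great_circle_def by (auto intro!: derivative_eq_intros simp: algebra_simps)

lemma great_circle_0 [simp]: "great_circle y u 0 = y"
  and great_circle_2pi [simp]: "great_circle y u (2 * pi) = y"
  by (simp_all add: great_circle_def)

lemma norm_great_circle:
  fixes y u :: "'a::real_inner"
  assumes "norm y = 1" and "norm u = 1" and "y \<bullet> u = 0"
  shows "norm (great_circle y u t) = 1"
proof -
  have "(norm (great_circle y u t))\<^sup>2 = (cos t)\<^sup>2 * (norm y)\<^sup>2 + (sin t)\<^sup>2 * (norm u)\<^sup>2 + 2 * cos t * sin t * (y \<bullet> u)"
    unfolding great_circle_def power2_norm_eq_inner
    by (simp add: inner_add_left inner_add_right inner_commute power2_eq_square algebra_simps)
  also have "\<dots> = 1\<^sup>2"
    using assms by simp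
  finally show ?thesis
    by (rule power2_eq_imp_eq) simp_all
qed

lemma scale_invariant_grad_scaleR:
  fixes L :: "real^'n \<Rightarrow> real" and g :: "real^'n \<Rightarrow> real^'n"
  assumes dL: "\<And>x. x \<noteq> 0 \<Longrightarrow> (L has_derivative (\<lambda>h. g x \<bullet> h)) (at x)"
    and "scale_invariant L" and "z \<noteq> 0" and "c > 0"
  shows "g (c *\<^sub>R z) = (1 / c) *\<^sub>R g z"
proof -
  have "((\<lambda>w. L (c *\<^sub>R w)) has_derivative (\<lambda>h. g (c *\<^sub>R z) \<bullet> (c *\<^sub>R h))) (at z)"
    using has_derivative_compose[OF has_derivative_scaleR_right[OF has_derivative_ident] dL]
      \<open>z \<noteq> 0\<close> \<open>c > 0\<close> by (simp add: o_def)
  moreover have "((\<lambda>w. L (c *\<^sub>R w)) has_derivative (\<lambda>h. g z \<bullet> h)) (at z)"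
  proof (rule has_derivative_transform_within_open[OF dL[OF \<open>z \<noteq> 0\<close>], of "- {0}"])
    show "\<And>x. x \<in> - {0} \<Longrightarrow> L x = L (c *\<^sub>R x)"
      using assms(2) \<open>c > 0\<close> unfolding scale_invariant_def by auto
  qed (use \<open>z \<noteq> 0\<close> in auto)
  ultimately have "(\<lambda>h. g (c *\<^sub>R z) \<bullet> (c *\<^sub>R h)) = (\<lambda>h. g z \<bullet> h)"
    by (rule has_derivative_unique)
  then have "\<forall>h. (c *\<^sub>R g (c *\<^sub>R z)) \<bullet> h = g z \<bullet> h"
    by (metis inner_scaleR_left inner_scaleR_right)
  then have scaled: "c *\<^sub>R g (c *\<^sub>R z) = g z"
    by (rule vector_eq_rdot[THEN iffD1])
  have "g (c *\<^sub>R z) = (1 / c) *\<^sub>R (c *\<^sub>R g (c *\<^sub>R z))"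
    using \<open>c > 0\<close> by simp
  then show ?thesis
    by (simp only: scaled)
qed

lemma scale_invariant_grad_orthogonal:
  fixes L :: "real^'n \<Rightarrow> real" and g :: "real^'n \<Rightarrow> real^'n"
  assumes dL: "\<And>x. x \<noteq> 0 \<Longrightarrow> (L has_derivative (\<lambda>h. g x \<bullet> h)) (at x)"
    and "scale_invariant L" and "z \<noteq> 0"
  shows "g z \<bullet> z = 0"
proof -
  have "(L has_derivative (\<lambda>h. g z \<bullet> h)) (at (1 *\<^sub>R z))"
    using dL \<open>z \<noteq> 0\<close> by simp
  from has_derivative_compose[OF has_derivative_scaleR_left[OF has_derivative_ident] this]
  have "((\<lambda>c. L (c *\<^sub>R z)) has_derivative (\<lambda>s. g z \<bullet> (s *\<^sub>R z))) (at 1)"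
    by (simp add: o_def)
  moreover have "((\<lambda>c. L (c *\<^sub>R z)) has_derivative (\<lambda>s. 0)) (at 1)"
  proof (rule has_derivative_transform_within_open[OF has_derivative_const[of "L z"], of "{0<..}"])
    show "\<And>c. c \<in> {0<..} \<Longrightarrow> L z = L (c *\<^sub>R z)"
      using assms(2) \<open>z \<noteq> 0\<close> unfolding scale_invariant_def by auto
  qed auto
  ultimately have "(\<lambda>s. g z \<bullet> (s *\<^sub>R z)) = (\<lambda>s. 0)"
    by (rule has_derivative_unique)
  from fun_cong[OF this, of 1] show ?thesis
    by simp
qed

lemma norm_grad_le_on_unit_sphere:
  fixes L :: "real^'n \<Rightarrow> real" and g :: "real^'n \<Rightarrow> real^'n" and H :: "real^'n \<Rightarrow> real^'n^'n"
  assumes "C2_grad_hess L g H" and "scale_invariant L" and "norm y = 1"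
    and M: "\<And>w. norm w = 1 \<Longrightarrow> spec_norm (H w) \<le> M"
  shows "norm (g y) \<le> pi * M"
proof (cases "g y = 0")
  case True
  then show ?thesis
    using M[OF \<open>norm y = 1\<close>] spec_norm_nonneg[of "H y"] by simp
next
  case False
  have dL: "\<And>x. x \<noteq> 0 \<Longrightarrow> (L has_derivative (\<lambda>h. g x \<bullet> h)) (at x)"
    and dg: "\<And>x. x \<noteq> 0 \<Longrightarrow> (g has_derivative (\<lambda>h. H x *v h)) (at x)"
    using assms(1) unfolding C2_grad_hess_def by blast+
  have orthogonal: "\<And>z. z \<noteq> 0 \<Longrightarrow> g z \<bullet> z = 0"
    using scale_invariant_grad_orthogonal[of L g] dL assms(2) by blast
  have "y \<noteq> 0"
    using \<open>norm y = 1\<close> by auto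
  define u where "u = sgn (g y)"
  have "norm u = 1" and "y \<bullet> u = 0"
    using False orthogonal[OF \<open>y \<noteq> 0\<close>]
    by (auto simp: u_def norm_sgn sgn_div_norm inner_commute)
  define \<gamma> where "\<gamma> = great_circle y u"
  define \<gamma>' where "\<gamma>' = great_circle u (- y)"
  have unit: "norm (\<gamma> t) = 1" "norm (\<gamma>' t) = 1" for t
    unfolding \<gamma>_def \<gamma>'_def using \<open>norm y = 1\<close> \<open>norm u = 1\<close> \<open>y \<bullet> u = 0\<close>
    by (auto intro!: norm_great_circle simp: inner_commute)
  then have nonzero: "\<gamma> t \<noteq> 0" for t
    by (metis norm_zero zero_neq_one)
  have d\<gamma>: "(\<gamma> has_derivative (\<lambda>s. s *\<^sub>R \<gamma>' t)) (at t)" for t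
    unfolding \<gamma>_def \<gamma>'_def by (rule great_circle_has_derivative)
  have d\<gamma>': "(\<gamma>' has_derivative (\<lambda>s. s *\<^sub>R - \<gamma> t)) (at t)" for t
    using great_circle_has_derivative[of u "- y" t]
    unfolding \<gamma>_def \<gamma>'_def by (simp add: great_circle_def algebra_simps)
  define f' where "f' t = g (\<gamma> t) \<bullet> \<gamma>' t" for t
  \<comment> \<open>The chain rule also produces \<open>- g (\<gamma> t) \<bullet> \<gamma> t\<close>, which vanishes by orthogonality.\<close>
  define f'' where "f'' t = (H (\<gamma> t) *v \<gamma>' t) \<bullet> \<gamma>' t" for t
  have "DERIV (\<lambda>t. L (\<gamma> t)) t :> f' t" for t
    using has_derivative_compose[OF d\<gamma> dL[OF nonzero]]
    by (rule has_derivative_imp_has_field_derivative) (simp add: f'_def)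
  moreover have "DERIV f' t :> f'' t" for t
  proof -
    have "((\<lambda>s. g (\<gamma> s)) has_derivative (\<lambda>s. H (\<gamma> t) *v (s *\<^sub>R \<gamma>' t))) (at t)"
      using has_derivative_compose[OF d\<gamma> dg[OF nonzero]] by (simp add: o_def)
    from has_derivative_inner[OF this d\<gamma>']
    show ?thesis
      unfolding f'_def
      by (rule has_derivative_imp_has_field_derivative)
        (simp add: f''_def matrix_vector_mult_scaleR orthogonal[OF nonzero])
  qed
  moreover have "\<bar>f'' t\<bar> \<le> M" for t
  proof -
    have "\<bar>f'' t\<bar> \<le> spec_norm (H (\<gamma> t))"
      using abs_quadratic_form_le_spec_norm[of "H (\<gamma> t)" "\<gamma>' t"] unit(2) by (simp add: f''_def)
    also have "\<dots> \<le> M"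
      by (rule M[OF unit(1)])
    finally show ?thesis .
  qed
  moreover have "f' 0 = norm (g y)" "f' (2 * pi) = norm (g y)"
    using False by (simp_all add: f'_def \<gamma>_def \<gamma>'_def u_def sgn_div_norm power2_norm_eq_inner[symmetric]
        power2_eq_square)
  ultimately have "\<bar>f' 0\<bar> \<le> (2 * pi - 0) / 2 * M"
    by (intro deriv_bound_by_second_deriv_of_periodic[of 0 "2 * pi" "\<lambda>t. L (\<gamma> t)"])
      (simp_all add: \<gamma>_def)
  with \<open>f' 0 = norm (g y)\<close> show ?thesis
    by simp
qed

theorem mainTheorem6:
  fixes L :: "real^'n \<Rightarrow> real" and g :: "real^'n \<Rightarrow> real^'n" and H :: "real^'n \<Rightarrow> real^'n^'n"
    and x :: "real^'n"
  assumes "C2_grad_hess L g H"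
    and "scale_invariant L"
    and "x \<noteq> 0"
  shows "norm (g x) \<le> pi / norm x * (SUP y\<in>sphere 0 1. spec_norm (H y))"
proof -
  define M where "M = (SUP y\<in>sphere 0 1. spec_norm (H y))"
  have "continuous_on (sphere 0 1) H"
    using assms(1) unfolding C2_grad_hess_def by (auto elim: continuous_on_subset)
  then have "bdd_above ((\<lambda>y. spec_norm (H y)) ` sphere 0 1)"
    by (rule bdd_above_spec_norm_image) simp
  then have M: "\<And>w. norm w = 1 \<Longrightarrow> spec_norm (H w) \<le> M"
    unfolding M_def by (intro cSUP_upper) simp_all
  define y where "y = (1 / norm x) *\<^sub>R x"
  have "norm y = 1" and x: "x = norm x *\<^sub>R y"
    using \<open>x \<noteq> 0\<close> by (simp_all add: y_def)
  then have "y \<noteq> 0"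
    by auto
  have dL: "\<And>z. z \<noteq> 0 \<Longrightarrow> (L has_derivative (\<lambda>h. g z \<bullet> h)) (at z)"
    using assms(1) unfolding C2_grad_hess_def by blast
  have "g x = (1 / norm x) *\<^sub>R g y"
    using scale_invariant_grad_scaleR[OF dL assms(2), of y "norm x"] \<open>x \<noteq> 0\<close> \<open>y \<noteq> 0\<close> x
    by auto
  then have "norm (g x) = norm (g y) / norm x"
    by simp
  also have "\<dots> \<le> pi * M / norm x"
    using norm_grad_le_on_unit_sphere[OF assms(1,2) \<open>norm y = 1\<close> M] by (simp add: divide_right_mono)
  finally show ?thesis
    by (simp add: M_def)
qed

end
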